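(* Let $\mathbf{x}_1,\dots,\mathbf{x}_n\in\mathbb{R}^d$ and define $L(\{\boldsymbol\mu_j\}_{j=1}^K,\{y_i\}_{i=1}^n)=\sum_{i=1}^n\|\mathbf{x}_i-\boldsymbol\mu_{y_i}\|_2^2$ for $\boldsymbol\mu_j\in\mathbb{R}^d$, $y_i\in[K]$. Let $\{\boldsymbol\mu_j^\star\},\{\hat{\boldsymbol\mu}_j\}\subseteq\mathbb{R}^d$, $\{y_i^\star\},\{\hat y_i\}\subseteq[K]$, $s=\min_{j\ne k}\|\boldsymbol\mu_j^\star-\boldsymbol\mu_k^\star\|_2$ and $n_{\min}=\min_{j\in[K]}|\{i:y_i^\star=j\}|$. Suppose that for some $C>0$ and $\delta\in(0,s/2)$: (1) $L(\{\hat{\boldsymbol\mu}_j\},\{\hat y_i\})\le C\cdot L(\{\boldsymbol\mu_j^\star\},\{y_i^\star\})$ and $\hat y_i\in\mathrm{argmin}_{j\in[K]}\|\mathbf{x}_i-\hat{\boldsymbol\mu}_j\|_2$ for all $i$; (2) $L(\{\boldsymbol\mu_j^\star\},\{y_i^\star\})\le\delta^2n_{\min}/[(1+\sqrt C)^2K]$. Then there exists a permutation $\tau$ of $[K]$ such that $\sum_{j=1}^K\|\boldsymbol\mu_j^\star-\hat{\boldsymbol\mu}_{\tau(j)}\|_2^2\le\frac{(1+\sqrt C)^2K}{n_{\min}}L(\{\boldsymbol\mu_j^\star\},\{y_i^\star\})$, $\{i:\hat y_i\ne\tau(y_i^\star)\}\subseteq\{i:\|\mathbf{x}_i-\boldsymbol\mu^\star_{y_i^\star}\|_2\ge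 s/2-\delta\}$, and $|\{i:\hat y_i\ne\tau(y_i^\star)\}|\le|\{i:\|\mathbf{x}_i-\boldsymbol\mu^\star_{y_i^\star}\|_2\ge s/2-\delta\}|\le\frac{L(\{\boldsymbol\mu_j^\star\},\{y_i^\star\})}{(s/2-\delta)^2}$. *)

theory Defs
  imports "HOL-Analysis.Analysis" "HOL-Combinatorics.Permutations"
begin

definition kmeans_loss :: "nat \<Rightarrow> (nat \<Rightarrow> 'a::real_normed_vector) \<Rightarrow> (nat \<Rightarrow> 'a) \<Rightarrow> (nat \<Rightarrow> nat) \<Rightarrow> real" where
  "kmeans_loss n x mu y = (\<Sum>i\<in>{1..n}. (norm (x i - mu (y i)))\<^sup>2)"

definition min_sep :: "nat \<Rightarrow> (nat \<Rightarrow> 'a::real_normed_vector) \<Rightarrow> real" where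
  "min_sep K mu = Min {norm (mu j - mu k) | j k. j \<in> {1..K} \<and> k \<in> {1..K} \<and> j \<noteq> k}"

definition min_cluster :: "nat \<Rightarrow> nat \<Rightarrow> (nat \<Rightarrow> nat) \<Rightarrow> nat" where
  "min_cluster n K y = Min {card {i\<in>{1..n}. y i = j} | j. j \<in> {1..K}}"

end

theory Submission
  imports Defs
begin

text \<open>Match every true center with its nearest estimated center. For a point of cluster \<open>j\<close>, the
  match of \<open>j\<close> is no farther from the true center than the center the point is assigned to, and
  by Minkowski's inequality the squared distances between true and assigned centers sum to at most
  \<open>(1 + \<surd>C)\<^sup>2 L\<^sup>*\<close>. Every cluster has at least \<open>n\<^sub>m\<^sub>i\<^sub>n\<close> points, so the squared matching errors
  sum to at most \<open>(1 + \<surd>C)\<^sup>2 L\<^sup>* / n\<^sub>m\<^sub>i\<^sub>n \<le> \<delta>\<^sup>2\<close>; each error is at most \<open>\<delta> < s/2\<close>, which makes the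
  matching injective. A point of cluster \<open>j\<close> assigned to the match of \<open>k \<noteq> j\<close> is closer to it than to
  the match of \<open>j\<close>, so by the triangle inequality it lies at distance at least \<open>s/2 - \<delta>\<close> from its
  true center, and Markov's inequality counts such points.\<close>

lemma kmeans_loss_eq_L2_set:
  "kmeans_loss n x mu y = (L2_set (\<lambda>i. norm (x i - mu (y i))) {1..n})\<^sup>2"
  by (simp add: kmeans_loss_def L2_set_def sum_nonneg)

lemma kmeans_loss_nonneg: "0 \<le> kmeans_loss n x mu y"
  by (simp add: kmeans_loss_eq_L2_set)

lemma min_sep_le:
  assumes "j \<in> {1..K}" "k \<in> {1..K}" "j \<noteq> k"
  shows "min_sep K mu \<le> norm (mu j - mu k)"
proof -
  have "{norm (mu j - mu k) | j k. j \<in> {1..K} \<and> k \<in> {1..K} \<and> j \<noteq> k}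
      \<subseteq> (\<lambda>(j, k). norm (mu j - mu k)) ` ({1..K} \<times> {1..K})"
    by auto
  then have "finite {norm (mu j - mu k) | j k. j \<in> {1..K} \<and> k \<in> {1..K} \<and> j \<noteq> k}"
    by (rule finite_subset) simp
  then show ?thesis
    unfolding min_sep_def using assms by (intro Min_le) blast+
qed

lemma min_cluster_le:
  assumes "j \<in> {1..K}"
  shows "min_cluster n K y \<le> card {i\<in>{1..n}. y i = j}"
  unfolding min_cluster_def using assms by (intro Min_le) auto

lemma card_far_points_le:
  assumes "t > 0"
  shows "real (card {i\<in>{1..n}. t \<le> norm (x i - mu (y i))}) \<le> kmeans_loss n x mu y / t\<^sup>2"
proof -
  let ?F = "{i\<in>{1..n}. t \<le> norm (x i - mu (y i))}"
  have "real (card ?F) * t\<^sup>2 \<le> (\<Sum>i\<in>?F. (norm (x i - mu (y i)))\<^sup>2)"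
    using assms by (intro sum_bounded_below) (auto intro: power_mono)
  also have "\<dots> \<le> kmeans_loss n x mu y"
    unfolding kmeans_loss_def by (intro sum_mono2) auto
  finally show ?thesis
    using assms by (simp add: field_simps)
qed

lemma sum_sq_assigned_center_dist_le:
  assumes "kmeans_loss n x nu z \<le> C * kmeans_loss n x mu y" "0 \<le> C"
  shows "(\<Sum>i\<in>{1..n}. (norm (mu (y i) - nu (z i)))\<^sup>2) \<le> (1 + sqrt C)\<^sup>2 * kmeans_loss n x mu y"
proof -
  let ?L = "kmeans_loss n x mu y"
  have "L2_set (\<lambda>i. norm (mu (y i) - nu (z i))) {1..n}
      \<le> L2_set (\<lambda>i. norm (x i - mu (y i)) + norm (x i - nu (z i))) {1..n}"
    by (intro L2_set_mono) (auto simp: norm_minus_commute intro: norm_diff_triangle_le)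
  also have "\<dots> \<le> sqrt ?L + sqrt (kmeans_loss n x nu z)"
    using L2_set_triangle_ineq by (simp add: kmeans_loss_eq_L2_set)
  also have "\<dots> \<le> (1 + sqrt C) * sqrt ?L"
    using assms by (simp add: real_sqrt_mult [symmetric] algebra_simps)
  finally have "(L2_set (\<lambda>i. norm (mu (y i) - nu (z i))) {1..n})\<^sup>2 \<le> ((1 + sqrt C) * sqrt ?L)\<^sup>2"
    by (intro power_mono) simp_all
  then show ?thesis
    by (simp add: L2_set_def sum_nonneg power_mult_distrib kmeans_loss_def)
qed

lemma min_cluster_mul_sum_nearest_le:
  assumes y_range: "\<forall>i\<in>{1..n}. y i \<in> {1..K}"
    and z_range: "\<forall>i\<in>{1..n}. z i \<in> {1..K}"
    and nearest: "\<And>j l. j \<in> {1..K} \<Longrightarrow> l \<in> {1..K} \<Longrightarrow> norm (mu j - nu (\<tau> j)) \<le> norm (mu j - nu l)"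
  shows "real (min_cluster n K y) * (\<Sum>j\<in>{1..K}. (norm (mu j - nu (\<tau> j)))\<^sup>2)
    \<le> (\<Sum>i\<in>{1..n}. (norm (mu (y i) - nu (z i)))\<^sup>2)"
proof -
  have cluster: "real (card {i\<in>{1..n}. y i = j}) * (norm (mu j - nu (\<tau> j)))\<^sup>2
      \<le> (\<Sum>i\<in>{i\<in>{1..n}. y i = j}. (norm (mu (y i) - nu (z i)))\<^sup>2)" if "j \<in> {1..K}" for j
    using that z_range nearest by (intro sum_bounded_below power_mono) auto
  have "real (min_cluster n K y) * (\<Sum>j\<in>{1..K}. (norm (mu j - nu (\<tau> j)))\<^sup>2)
      \<le> (\<Sum>j\<in>{1..K}. real (card {i\<in>{1..n}. y i = j}) * (norm (mu j - nu (\<tau> j)))\<^sup>2)"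
    unfolding sum_distrib_left by (intro sum_mono mult_right_mono of_nat_mono min_cluster_le) simp_all
  also have "\<dots> \<le> (\<Sum>j\<in>{1..K}. \<Sum>i\<in>{i\<in>{1..n}. y i = j}. (norm (mu (y i) - nu (z i)))\<^sup>2)"
    using cluster by (intro sum_mono)
  also have "\<dots> = (\<Sum>i\<in>{1..n}. (norm (mu (y i) - nu (z i)))\<^sup>2)"
    using y_range by (intro sum.group) auto
  finally show ?thesis .
qed

lemma inj_on_if_close_to_separated:
  assumes close: "\<And>j. j \<in> A \<Longrightarrow> norm (mu j - nu (f j)) \<le> \<delta>"
    and separated: "\<And>j k. j \<in> A \<Longrightarrow> k \<in> A \<Longrightarrow> j \<noteq> k \<Longrightarrow> 2 * \<delta> < norm (mu j - mu k)"
  shows "inj_on f A"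
proof (rule inj_onI, rule ccontr)
  fix j k assume "j \<in> A" "k \<in> A" "f j = f k" "j \<noteq> k"
  have "norm (mu j - mu k) \<le> norm (mu j - nu (f j)) + norm (mu k - nu (f j))"
    using norm_triangle_ineq4[of "mu j - nu (f j)" "mu k - nu (f j)"] by simp
  also have "\<dots> \<le> 2 * \<delta>"
    using close[OF \<open>j \<in> A\<close>] close[OF \<open>k \<in> A\<close>] \<open>f j = f k\<close> by simp
  finally show False
    using separated \<open>j \<in> A\<close> \<open>k \<in> A\<close> \<open>j \<noteq> k\<close> by fastforce
qed

lemma inj_on_endo_permutes:
  assumes "finite S" "f ` S \<subseteq> S" "inj_on f S" "\<And>x. x \<notin> S \<Longrightarrow> f x = x"
  shows "f permutes S"
  using assms by (intro bij_imp_permutes) (simp_all add: bij_betw_def endo_inj_surj)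

lemma le_of_sum_power2_le:
  fixes f :: "'b \<Rightarrow> real"
  assumes "finite A" "j \<in> A" "(\<Sum>i\<in>A. (f i)\<^sup>2) \<le> \<delta>\<^sup>2" "0 \<le> \<delta>"
  shows "f j \<le> \<delta>"
proof (rule power2_le_imp_le)
  have "(f j)\<^sup>2 \<le> (\<Sum>i\<in>A. (f i)\<^sup>2)"
    using assms(1,2) by (intro member_le_sum) auto
  with assms(3) show "(f j)\<^sup>2 \<le> \<delta>\<^sup>2"
    by linarith
qed (rule assms(4))

lemma closer_to_other_center_imp_far:
  fixes p a b u v :: "'a::real_normed_vector"
  assumes "norm (a - u) \<le> \<delta>" "norm (b - v) \<le> \<delta>" "norm (p - v) \<le> norm (p - u)"
  shows "norm (a - b) / 2 - \<delta> \<le> norm (p - a)"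
proof -
  have "norm (a - b) \<le> norm (p - a) + norm (p - v) + norm (b - v)"
    by (metis norm_diff_triangle_le norm_minus_commute add_mono order_refl)
  also have "\<dots> \<le> norm (p - a) + (norm (p - a) + norm (a - u)) + norm (b - v)"
    using assms(3) norm_diff_triangle_ineq[of p a a u] by simp
  finally show ?thesis
    using assms(1,2) by simp
qed

definition nearest_match :: "nat \<Rightarrow> (nat \<Rightarrow> 'a::real_normed_vector) \<Rightarrow> (nat \<Rightarrow> 'a) \<Rightarrow> nat \<Rightarrow> nat" where
  "nearest_match K mu nu j =
    (if j \<in> {1..K} then arg_min_on (\<lambda>l. norm (mu j - nu l)) {1..K} else j)"

lemma nearest_match_in:
  assumes "j \<in> {1..K}"
  shows "nearest_match K mu nu j \<in> {1..K}"
  unfolding nearest_match_def if_P[OF assms] using assms by (intro arg_min_if_finite(1)) auto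

lemma nearest_match_le:
  assumes "j \<in> {1..K}" "l \<in> {1..K}"
  shows "norm (mu j - nu (nearest_match K mu nu j)) \<le> norm (mu j - nu l)"
  unfolding nearest_match_def if_P[OF assms(1)] using assms by (intro arg_min_least) auto

lemma min_cluster_mul_sum_sq_nearest_match_le:
  assumes y_range: "\<forall>i\<in>{1..n}. y i \<in> {1..K}"
    and z_range: "\<forall>i\<in>{1..n}. z i \<in> {1..K}"
    and loss: "kmeans_loss n x nu z \<le> C * kmeans_loss n x mu y" "0 \<le> C"
  shows "real (min_cluster n K y) * (\<Sum>j\<in>{1..K}. (norm (mu j - nu (nearest_match K mu nu j)))\<^sup>2)
    \<le> (1 + sqrt C)\<^sup>2 * kmeans_loss n x mu y"
proof -
  have "real (min_cluster n K y) * (\<Sum>j\<in>{1..K}. (norm (mu j - nu (nearest_match K mu nu j)))\<^sup>2)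
      \<le> (\<Sum>i\<in>{1..n}. (norm (mu (y i) - nu (z i)))\<^sup>2)"
    using y_range z_range by (intro min_cluster_mul_sum_nearest_le nearest_match_le)
  also have "\<dots> \<le> (1 + sqrt C)\<^sup>2 * kmeans_loss n x mu y"
    using loss by (rule sum_sq_assigned_center_dist_le)
  finally show ?thesis .
qed

lemma nearest_match_permutes:
  assumes close: "\<And>j. j \<in> {1..K} \<Longrightarrow> norm (mu j - nu (nearest_match K mu nu j)) \<le> \<delta>"
    and "\<delta> < min_sep K mu / 2"
  shows "nearest_match K mu nu permutes {1..K}"
proof (rule inj_on_endo_permutes)
  show "inj_on (nearest_match K mu nu) {1..K}"
    using close assms(2) min_sep_le[of _ K _ mu]
    by (intro inj_on_if_close_to_separated[of _ mu nu _ \<delta>]) fastforce+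
  show "nearest_match K mu nu j = j" if "j \<notin> {1..K}" for j
    using that by (simp add: nearest_match_def del: atLeastAtMost_iff)
  show "nearest_match K mu nu ` {1..K} \<subseteq> {1..K}"
    using nearest_match_in by blast
qed simp

lemma misclassified_subset_far:
  assumes perm: "\<tau> permutes {1..K}"
    and close: "\<And>j. j \<in> {1..K} \<Longrightarrow> norm (mu j - nu (\<tau> j)) \<le> \<delta>"
    and y_range: "\<forall>i\<in>{1..n}. y i \<in> {1..K}"
    and z_range: "\<forall>i\<in>{1..n}. z i \<in> {1..K}"
    and z_nearest: "\<forall>i\<in>{1..n}. \<forall>j\<in>{1..K}. norm (x i - nu (z i)) \<le> norm (x i - nu j)"
  shows "{i\<in>{1..n}. z i \<noteq> \<tau> (y i)} \<subseteq> {i\<in>{1..n}. min_sep K mu / 2 - \<delta> \<le> norm (x i - mu (y i))}"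
proof safe
  fix i assume i: "i \<in> {1..n}" and "z i \<noteq> \<tau> (y i)"
  obtain k where k: "k \<in> {1..K}" "z i = \<tau> k"
    using permutes_image[OF perm] z_range i by blast
  have j: "y i \<in> {1..K}"
    using y_range i by blast
  have "min_sep K mu \<le> norm (mu (y i) - mu k)"
    using j k \<open>z i \<noteq> \<tau> (y i)\<close> by (intro min_sep_le) auto
  moreover have "norm (mu (y i) - mu k) / 2 - \<delta> \<le> norm (x i - mu (y i))"
  proof (rule closer_to_other_center_imp_far)
    show "norm (x i - nu (\<tau> k)) \<le> norm (x i - nu (\<tau> (y i)))"
      using z_nearest[rule_format, OF i permutes_in_image[OF perm, THEN iffD2, OF j]] k(2) by simp
  qed (use close j k in auto)
  ultimately show "min_sep K mu / 2 - \<delta> \<le> norm (x i - mu (y i))"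
    by simp
qed

theorem lemmaD1:
  fixes x mustar muhat :: "nat \<Rightarrow> 'a::euclidean_space"
    and ystar yhat :: "nat \<Rightarrow> nat"
    and n K :: nat and C \<delta> :: real
  defines "s \<equiv> min_sep K mustar"
    and "nmin \<equiv> min_cluster n K ystar"
    and "Lstar \<equiv> kmeans_loss n x mustar ystar"
  assumes K2: "K \<ge> 2"
    and ystar_range: "\<forall>i\<in>{1..n}. ystar i \<in> {1..K}"
    and yhat_range: "\<forall>i\<in>{1..n}. yhat i \<in> {1..K}"
    and nmin_pos: "nmin > 0"
    and C_pos: "C > 0"
    and delta: "0 < \<delta>" "\<delta> < s / 2"
    and cond1a: "kmeans_loss n x muhat yhat \<le> C * Lstar"
    and cond1b: "\<forall>i\<in>{1..n}. \<forall>j\<in>{1..K}. norm (x i - muhat (yhat i)) \<le> norm (x i - muhat j)"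
    and cond2: "Lstar \<le> \<delta>\<^sup>2 * real nmin / ((1 + sqrt C)\<^sup>2 * real K)"
  shows "\<exists>\<tau>. \<tau> permutes {1..K} \<and>
    (\<Sum>j\<in>{1..K}. (norm (mustar j - muhat (\<tau> j)))\<^sup>2) \<le> (1 + sqrt C)\<^sup>2 * real K / real nmin * Lstar \<and>
    {i\<in>{1..n}. yhat i \<noteq> \<tau> (ystar i)} \<subseteq> {i\<in>{1..n}. norm (x i - mustar (ystar i)) \<ge> s / 2 - \<delta>} \<and>
    card {i\<in>{1..n}. yhat i \<noteq> \<tau> (ystar i)} \<le> card {i\<in>{1..n}. norm (x i - mustar (ystar i)) \<ge> s / 2 - \<delta>} \<and>
    real (card {i\<in>{1..n}. norm (x i - mustar (ystar i)) \<ge> s / 2 - \<delta>}) \<le> Lstar / (s / 2 - \<delta>)\<^sup>2"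
proof -
  define \<tau> where "\<tau> = nearest_match K mustar muhat"
  let ?E = "\<Sum>j\<in>{1..K}. (norm (mustar j - muhat (\<tau> j)))\<^sup>2"
  have "real nmin * ?E \<le> (1 + sqrt C)\<^sup>2 * Lstar"
    using ystar_range yhat_range cond1a C_pos unfolding nmin_def Lstar_def \<tau>_def
    by (intro min_cluster_mul_sum_sq_nearest_match_le) simp_all
  also have "\<dots> \<le> real K * ((1 + sqrt C)\<^sup>2 * Lstar)"
    using K2 kmeans_loss_nonneg[of n x mustar ystar] unfolding Lstar_def
    by (simp add: mult_le_cancel_right1 not_less)
  finally have E_le: "real nmin * ?E \<le> real K * ((1 + sqrt C)\<^sup>2 * Lstar)" .
  have "0 < 1 + sqrt C"
    using C_pos by (simp add: add_pos_nonneg)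
  with cond2 K2 have "real K * ((1 + sqrt C)\<^sup>2 * Lstar) \<le> real nmin * \<delta>\<^sup>2"
    by (simp add: field_simps)
  with E_le have "real nmin * ?E \<le> real nmin * \<delta>\<^sup>2"
    by linarith
  with nmin_pos have "?E \<le> \<delta>\<^sup>2"
    by (simp add: mult_le_cancel_left_pos)
  then have tau_close: "norm (mustar j - muhat (\<tau> j)) \<le> \<delta>" if "j \<in> {1..K}" for j
    using that delta
    by (intro le_of_sum_power2_le[of "{1..K}" _ "\<lambda>j. norm (mustar j - muhat (\<tau> j))"]) simp_all
  have tau_perm: "\<tau> permutes {1..K}"
    using tau_close delta(2) unfolding s_def \<tau>_def by (rule nearest_match_permutes)
  from E_le nmin_pos have "?E \<le> (1 + sqrt C)\<^sup>2 * real K / real nmin * Lstar"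
    by (simp add: field_simps)
  moreover have misclassified: "{i\<in>{1..n}. yhat i \<noteq> \<tau> (ystar i)} \<subseteq> {i\<in>{1..n}. norm (x i - mustar (ystar i)) \<ge> s / 2 - \<delta>}"
    using tau_perm tau_close ystar_range yhat_range cond1b unfolding s_def
    by (rule misclassified_subset_far)
  moreover from misclassified
  have "card {i\<in>{1..n}. yhat i \<noteq> \<tau> (ystar i)} \<le> card {i\<in>{1..n}. norm (x i - mustar (ystar i)) \<ge> s / 2 - \<delta>}"
    by (intro card_mono) simp_all
  moreover have "real (card {i\<in>{1..n}. norm (x i - mustar (ystar i)) \<ge> s / 2 - \<delta>}) \<le> Lstar / (s / 2 - \<delta>)\<^sup>2"
    unfolding Lstar_def using delta by (intro card_far_points_le) simp
  ultimately show ?thesis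
    using tau_perm by blast
qed

end
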